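(* Let $L\in\mathbb N$ and $0\le p<1$. On $\Omega=\{0,1\}^L$, with $\omega=(\omega(0),\dots,\omega(L-1))$ and $|\omega|=\sum_j\omega(j)$, let $Q$ be the transition function $$Q\big(\eta,(\eta(1),\dots,\eta(L-1),s)\big)=\begin{cases}\frac1L\big(|\eta|p+(L-|\eta|)(1-p)\big),& s=1,\\ \frac1L\big((L-|\eta|)p+|\eta|(1-p)\big),& s=0,\end{cases}$$ and $Q(\eta,\omega)=0$ for all other $\omega$. Let $c_j=(1-p)\big(1-\frac jL\big)+\frac jLp$ for $0\le j\le L$. Then $$\pi(\omega)=Z^{-1}\prod_{j=0}^{|\omega|-1}\frac{c_j}{c_{L-j-1}},$$ with $Z$ the normalizing constant (empty product $=1$), is a stationary distribution of $Q$, i.e. $\pi Q=\pi$. *)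

theory Defs
  imports Complex_Main
begin

text \<open>State space: binary words of length L, encoded as bool lists
  (True = 1, False = 0); position j of the list is omega(j).\<close>
definition Omega :: "nat \<Rightarrow> bool list set" where
  "Omega L = {w. length w = L}"

definition wt :: "bool list \<Rightarrow> nat" where
  "wt w = length (filter id w)"

definition Qtrans :: "nat \<Rightarrow> real \<Rightarrow> bool list \<Rightarrow> bool list \<Rightarrow> real" where
  "Qtrans L p eta w =
     (if (\<exists>s. w = tl eta @ [s]) then
        (if last w
         then (real (wt eta) * p + (real L - real (wt eta)) * (1 - p)) / real L
         else ((real L - real (wt eta)) * p + real (wt eta) * (1 - p)) / real L)
      else 0)"

definition cc :: "nat \<Rightarrow> real \<Rightarrow> nat \<Rightarrow> real" where
  "cc L p j = (1 - p) * (1 - real j / real L) + real j / real L * p"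

definition weight :: "nat \<Rightarrow> real \<Rightarrow> bool list \<Rightarrow> real" where
  "weight L p w = (\<Prod>j<wt w. cc L p j / cc L p (L - j - 1))"

definition Zconst :: "nat \<Rightarrow> real \<Rightarrow> real" where
  "Zconst L p = (\<Sum>w\<in>Omega L. weight L p w)"

definition piD :: "nat \<Rightarrow> real \<Rightarrow> bool list \<Rightarrow> real" where
  "piD L p w = weight L p w / Zconst L p"

end

theory Submission
  imports Defs
begin

text \<open>The only predecessors of \<open>w = u @ [s]\<close> under \<open>Q\<close> are \<open>True # u\<close> and \<open>False # u\<close>.
  Writing \<open>m = |u|\<close>, the weight ratio c(m) / c(L-m-1) between them is exactly the
  ratio of the probabilities of appending a one resp. a zero, so the two inflows into \<open>w\<close>
  combine, via c(k) + c(L-k) = 1, to the weight of \<open>w\<close>.\<close>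

lemma cc_pos:
  assumes "0 \<le> p" "p < 1" "j < L"
  shows "cc L p j > 0"
proof -
  have "(1 - p) * (1 - real j / real L) > 0" using assms by simp
  moreover have "real j / real L * p \<ge> 0" using assms by simp
  ultimately show ?thesis unfolding cc_def by linarith
qed

lemma cc_add_cc_diff:
  assumes "k \<le> L" "L \<ge> 1"
  shows "cc L p k + cc L p (L - k) = 1"
  using assms unfolding cc_def by (simp add: of_nat_diff field_simps)

lemma wt_le_length: "wt u \<le> length u"
  unfolding wt_def by (rule length_filter_le)

lemma wt_Cons: "wt (b # u) = (if b then Suc (wt u) else wt u)"
  unfolding wt_def by simp

lemma wt_snoc: "wt (u @ [b]) = wt (b # u)"
  unfolding wt_def by simp

lemma finite_Omega: "finite (Omega L)"
  using finite_lists_length_eq[of "UNIV :: bool set" L] by (simp add: Omega_def)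

lemma weight_pos:
  assumes "0 \<le> p" "p < 1" "w \<in> Omega L"
  shows "weight L p w > 0"
proof -
  have "wt w \<le> L" using wt_le_length[of w] assms(3) by (simp add: Omega_def)
  with assms show ?thesis
    unfolding weight_def by (auto intro!: prod_pos divide_pos_pos cc_pos)
qed

lemma weight_snoc: "weight L p (u @ [b]) = weight L p (b # u)"
  unfolding weight_def wt_snoc ..

lemma weight_balance:
  assumes "0 \<le> p" "p < 1" "wt u < L"
  shows "weight L p (True # u) * cc L p (L - wt u - 1) = weight L p (False # u) * cc L p (wt u)"
proof -
  have "cc L p (L - wt u - 1) > 0" using assms cc_pos by simp
  thus ?thesis unfolding weight_def wt_Cons by simp
qed

lemma Qtrans_eq_0:
  assumes "\<forall>s. w \<noteq> tl eta @ [s]"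
  shows "Qtrans L p eta w = 0"
  using assms unfolding Qtrans_def by simp

lemma Qtrans_snoc:
  assumes "length eta = L" "L \<ge> 1"
  shows "Qtrans L p eta (tl eta @ [s]) = (if s then cc L p (wt eta) else cc L p (L - wt eta))"
proof -
  have "wt eta \<le> L" using wt_le_length[of eta] assms by simp
  with assms show ?thesis unfolding Qtrans_def cc_def by (auto simp: field_simps of_nat_diff)
qed

lemma sum_Qtrans_predecessors:
  assumes "L \<ge> 1" "u @ [s] \<in> Omega L"
  shows "(\<Sum>eta\<in>Omega L. f eta * Qtrans L p eta (u @ [s]))
       = f (True # u) * Qtrans L p (True # u) (u @ [s])
       + f (False # u) * Qtrans L p (False # u) (u @ [s])"
proof -
  have preds: "{True # u, False # u} \<subseteq> Omega L" using assms by (auto simp: Omega_def)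
  have "(\<Sum>eta\<in>Omega L. f eta * Qtrans L p eta (u @ [s]))
      = (\<Sum>eta\<in>{True # u, False # u}. f eta * Qtrans L p eta (u @ [s]))"
  proof (rule sum.mono_neutral_right[OF finite_Omega preds], rule ballI)
    fix eta assume eta: "eta \<in> Omega L - {True # u, False # u}"
    have "\<forall>s'. u @ [s] \<noteq> tl eta @ [s']"
    proof (cases eta)
      case (Cons b v)
      with eta show ?thesis by (cases b) auto
    qed (use eta assms in \<open>simp add: Omega_def\<close>)
    then show "f eta * Qtrans L p eta (u @ [s]) = 0" by (simp add: Qtrans_eq_0)
  qed
  then show ?thesis by simp
qed

lemma weight_stationary:
  assumes "L \<ge> 1" "0 \<le> p" "p < 1" "w \<in> Omega L"
  shows "(\<Sum>eta\<in>Omega L. weight L p eta * Qtrans L p eta w) = weight L p w"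
proof -
  obtain u s where w: "w = u @ [s]"
    using assms by (cases w rule: rev_cases) (auto simp: Omega_def)
  let ?m = "wt u" and ?WT = "weight L p (True # u)" and ?WF = "weight L p (False # u)"
  have lu: "length (b # u) = L" for b using assms w by (simp add: Omega_def)
  have m: "?m < L" using wt_le_length[of u] lu[of True] by simp
  have Q: "Qtrans L p (b # u) (u @ [s]) = (if s then cc L p (wt (b # u)) else cc L p (L - wt (b # u)))"
    for b using Qtrans_snoc[OF lu assms(1), where s = s] by simp
  have balance: "?WT * cc L p (L - ?m - 1) = ?WF * cc L p ?m"
    using weight_balance[OF assms(2,3) m] .
  have "(\<Sum>eta\<in>Omega L. weight L p eta * Qtrans L p eta w)
      = (if s then ?WT * cc L p (Suc ?m) + ?WF * cc L p ?m
              else ?WT * cc L p (L - ?m - 1) + ?WF * cc L p (L - ?m))"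
    using sum_Qtrans_predecessors[OF assms(1) assms(4)[unfolded w]] by (simp add: w Q wt_Cons)
  also have "\<dots> = (if s then ?WT * (cc L p (Suc ?m) + cc L p (L - Suc ?m))
                        else ?WF * (cc L p ?m + cc L p (L - ?m)))"
    using balance by (simp add: algebra_simps)
  also have "\<dots> = weight L p (s # u)"
    using m assms(1) by (simp add: cc_add_cc_diff del: diff_Suc_Suc)
  finally show ?thesis by (simp add: w weight_snoc)
qed

theorem mainTheorem14:
  fixes L :: nat and p :: real
  assumes "L \<ge> 1" and "0 \<le> p" and "p < 1"
  shows "(\<forall>w\<in>Omega L. piD L p w \<ge> 0)
       \<and> (\<Sum>w\<in>Omega L. piD L p w) = 1
       \<and> (\<forall>w\<in>Omega L. (\<Sum>eta\<in>Omega L. piD L p eta * Qtrans L p eta w) = piD L p w)"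
proof -
  have "replicate L True \<in> Omega L" by (simp add: Omega_def)
  then have Z: "Zconst L p > 0"
    unfolding Zconst_def using weight_pos[OF assms(2,3)]
    by (intro sum_pos[OF finite_Omega]) auto
  have "\<forall>w\<in>Omega L. piD L p w \<ge> 0"
    using weight_pos[OF assms(2,3)] Z by (simp add: piD_def less_imp_le)
  moreover have "(\<Sum>w\<in>Omega L. piD L p w) = 1"
    using Z by (simp add: piD_def Zconst_def sum_divide_distrib[symmetric])
  moreover have "(\<Sum>eta\<in>Omega L. piD L p eta * Qtrans L p eta w) = piD L p w"
    if "w \<in> Omega L" for w
    using weight_stationary[OF assms that]
    by (simp add: piD_def sum_divide_distrib[symmetric])
  ultimately show ?thesis by blast
qed

end
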